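(* Let $\Gamma$ be a distance-regular antipodal double cover with diameter $D\ge 3$ and vertex set $X$. Let $x\in X$ and let $\hat{x}$ be the antipode of $x$. Then a subspace $W\subseteq V$ is an irreducible $T(x)$-module if and only if $W$ is an irreducible $T(\hat{x})$-module.
   Context: A distance-regular graph of diameter $D$ is an antipodal double cover if for every vertex $x$ there is exactly one vertex $\hat{x}$ (the antipode of $x$) with $\partial(x,\hat{x})=D$. Let $A$ be the adjacency matrix, $V=\mathbb{C}^X$, and for $x\in X$ and $0\le i\le D$ let $E^*_i(x)$ be the diagonal matrix with $(E^*_i(x))_{yy}=1$ if $\partial(x,y)=i$ and $0$ otherwise. The Terwilliger algebra $T(x)$ is the subalgebra of $\mathrm{Mat}_X(\mathbb{C})$ generated by $A,E^*_0(x),\dots,E^*_D(x)$. A $T(x)$-module is a subspace $W\subseteq V$ with $BW\subseteq W$ for all $B\in T(x)$; it is irreducible if it is nonzero and has no $T(x)$-submodules other than $0$ and $W$. *)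

theory Defs
  imports Main "HOL.Complex"
begin

text \<open>Graphs: vertex set = the finite type 'a (so X = UNIV), adjacency relation E.\<close>

definition simple_graph :: "('a \<Rightarrow> 'a \<Rightarrow> bool) \<Rightarrow> bool" where
  "simple_graph E \<longleftrightarrow> (\<forall>x y. E x y \<longrightarrow> E y x) \<and> (\<forall>x. \<not> E x x)"

inductive walk :: "('a \<Rightarrow> 'a \<Rightarrow> bool) \<Rightarrow> nat \<Rightarrow> 'a \<Rightarrow> 'a \<Rightarrow> bool" for E where
  walk0: "walk E 0 x x"
| walkS: "E x y \<Longrightarrow> walk E n y z \<Longrightarrow> walk E (Suc n) x z"

definition connected_graph :: "('a \<Rightarrow> 'a \<Rightarrow> bool) \<Rightarrow> bool" where
  "connected_graph E \<longleftrightarrow> (\<forall>x y. \<exists>n. walk E n x y)"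

definition gdist :: "('a \<Rightarrow> 'a \<Rightarrow> bool) \<Rightarrow> 'a \<Rightarrow> 'a \<Rightarrow> nat" where
  "gdist E x y = (LEAST n. walk E n x y)"

definition diameter :: "('a::finite \<Rightarrow> 'a \<Rightarrow> bool) \<Rightarrow> nat" where
  "diameter E = Max {gdist E x y | x y. True}"

definition distance_regular :: "('a::finite \<Rightarrow> 'a \<Rightarrow> bool) \<Rightarrow> bool" where
  "distance_regular E \<longleftrightarrow> simple_graph E \<and> connected_graph E \<and>
     (\<forall>h i j x y x' y'. gdist E x y = h \<longrightarrow> gdist E x' y' = h \<longrightarrow>
        card {z. gdist E x z = i \<and> gdist E y z = j} =
        card {z. gdist E x' z = i \<and> gdist E y' z = j})"

definition antipodal_double_cover :: "('a::finite \<Rightarrow> 'a \<Rightarrow> bool) \<Rightarrow> bool" where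
  "antipodal_double_cover E \<longleftrightarrow> distance_regular E \<and>
     (\<forall>x. \<exists>!y. gdist E x y = diameter E)"

type_synonym 'a cmat = "'a \<Rightarrow> 'a \<Rightarrow> complex"

definition adj_mat :: "('a \<Rightarrow> 'a \<Rightarrow> bool) \<Rightarrow> 'a cmat" where
  "adj_mat E = (\<lambda>y z. if E y z then 1 else 0)"

definition dual_idem :: "('a \<Rightarrow> 'a \<Rightarrow> bool) \<Rightarrow> 'a \<Rightarrow> nat \<Rightarrow> 'a cmat" where
  "dual_idem E x i = (\<lambda>y z. if y = z \<and> gdist E x y = i then 1 else 0)"

definition id_mat :: "'a cmat" where
  "id_mat = (\<lambda>y z. if y = z then 1 else 0)"

definition mat_mult :: "'a::finite cmat \<Rightarrow> 'a cmat \<Rightarrow> 'a cmat" where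
  "mat_mult M N = (\<lambda>y z. \<Sum>w\<in>UNIV. M y w * N w z)"

definition mat_vec :: "'a::finite cmat \<Rightarrow> ('a \<Rightarrow> complex) \<Rightarrow> ('a \<Rightarrow> complex)" where
  "mat_vec M v = (\<lambda>y. \<Sum>z\<in>UNIV. M y z * v z)"

inductive_set terwilliger_alg :: "('a::finite \<Rightarrow> 'a \<Rightarrow> bool) \<Rightarrow> 'a \<Rightarrow> 'a cmat set"
  for E x where
  gen_A: "adj_mat E \<in> terwilliger_alg E x"
| gen_E: "i \<le> diameter E \<Longrightarrow> dual_idem E x i \<in> terwilliger_alg E x"
| gen_I: "id_mat \<in> terwilliger_alg E x"
| add: "M \<in> terwilliger_alg E x \<Longrightarrow> N \<in> terwilliger_alg E x \<Longrightarrow>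
          (\<lambda>y z. M y z + N y z) \<in> terwilliger_alg E x"
| smult: "M \<in> terwilliger_alg E x \<Longrightarrow> (\<lambda>y z. c * M y z) \<in> terwilliger_alg E x"
| mult: "M \<in> terwilliger_alg E x \<Longrightarrow> N \<in> terwilliger_alg E x \<Longrightarrow>
          mat_mult M N \<in> terwilliger_alg E x"

definition csubspace_fun :: "('a \<Rightarrow> complex) set \<Rightarrow> bool" where
  "csubspace_fun W \<longleftrightarrow> (\<lambda>_. 0) \<in> W \<and> (\<forall>v\<in>W. \<forall>w\<in>W. (\<lambda>y. v y + w y) \<in> W)
     \<and> (\<forall>c. \<forall>v\<in>W. (\<lambda>y. c * v y) \<in> W)"

definition T_module :: "('a::finite \<Rightarrow> 'a \<Rightarrow> bool) \<Rightarrow> 'a \<Rightarrow> ('a \<Rightarrow> complex) set \<Rightarrow> bool" where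
  "T_module E x W \<longleftrightarrow> csubspace_fun W \<and>
     (\<forall>B\<in>terwilliger_alg E x. \<forall>v\<in>W. mat_vec B v \<in> W)"

definition irreducible_T_module :: "('a::finite \<Rightarrow> 'a \<Rightarrow> bool) \<Rightarrow> 'a \<Rightarrow> ('a \<Rightarrow> complex) set \<Rightarrow> bool" where
  "irreducible_T_module E x W \<longleftrightarrow> T_module E x W \<and> W \<noteq> {\<lambda>_. 0} \<and>
     (\<forall>U. T_module E x U \<longrightarrow> U \<subseteq> W \<longrightarrow> U = {\<lambda>_. 0} \<or> U = W)"

end

theory Submission
  imports Defs
begin

text \<open>The antipode \<open>xh\<close> of \<open>x\<close> satisfies \<open>\<partial>(z, xh) = D - \<partial>(x, z)\<close> for every vertex \<open>z\<close>:
  by distance-regularity the number of vertices at distance \<open>D\<close> from \<open>x\<close> and \<open>D - i\<close> from \<open>z\<close>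
  depends only on \<open>i = \<partial>(x, z)\<close>, and a vertex on a geodesic from \<open>x\<close> to \<open>xh\<close> shows that this
  number is \<open>1\<close>, the only such vertex being \<open>xh\<close>. Hence \<open>E*\<^sub>i(x) = E*\<^sub>D\<^sub>-\<^sub>i(xh)\<close>, so \<open>T(x) = T(xh)\<close>
  and the two algebras have the same modules.\<close>

lemma walk_append: "walk E m x y \<Longrightarrow> walk E n y z \<Longrightarrow> walk E (m + n) x z"
  by (induction rule: walk.induct) (auto intro: walk.intros)

lemma walk_reverse:
  assumes "simple_graph E"
  shows "walk E n x y \<Longrightarrow> walk E n y x"
proof (induction rule: walk.induct)
  case (walk0 x)
  show ?case by (rule walk.walk0)
next
  case (walkS x y n z)
  have "walk E 1 y x"
    using walkS(1) assms by (auto simp: simple_graph_def intro: walk.intros)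
  from walk_append[OF walkS(3) this] show ?case by simp
qed

lemma walk_split: "walk E (m + n) x z \<Longrightarrow> \<exists>y. walk E m x y \<and> walk E n y z"
proof (induction m arbitrary: x)
  case 0
  then show ?case by (auto intro: walk.intros)
next
  case (Suc m)
  then obtain y where "E x y" "walk E (m + n) y z"
    by (auto elim: walk.cases)
  with Suc.IH obtain w where "walk E m y w" "walk E n w z" by blast
  with \<open>E x y\<close> show ?case by (auto intro: walk.intros)
qed

lemma walk_gdist: "connected_graph E \<Longrightarrow> walk E (gdist E x y) x y"
  unfolding gdist_def connected_graph_def by (metis LeastI)

lemma gdist_le_walk: "walk E n x y \<Longrightarrow> gdist E x y \<le> n"
  unfolding gdist_def by (rule Least_le)

lemma gdist_commute: "simple_graph E \<Longrightarrow> connected_graph E \<Longrightarrow> gdist E x y = gdist E y x"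
  by (meson antisym gdist_le_walk walk_gdist walk_reverse)

lemma gdist_triangle: "connected_graph E \<Longrightarrow> gdist E x z \<le> gdist E x y + gdist E y z"
  by (meson gdist_le_walk walk_gdist walk_append)

lemma gdist_le_diameter: "gdist E x y \<le> diameter (E :: 'a::finite \<Rightarrow> 'a \<Rightarrow> bool)"
proof -
  have "{gdist E x y | x y. True} = (\<lambda>(x, y). gdist E x y) ` UNIV" by auto
  then have "finite {gdist E x y | x y. True}" by simp
  then show ?thesis unfolding diameter_def by (rule Max_ge) blast
qed

lemma geodesic_vertex:
  assumes "connected_graph E" and "i \<le> gdist E x y"
  obtains z where "gdist E x z = i" and "gdist E z y = gdist E x y - i"
proof -
  have "walk E (i + (gdist E x y - i)) x y"
    using walk_gdist[OF assms(1)] assms(2) by simp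
  then obtain z where "walk E i x z" "walk E (gdist E x y - i) z y"
    by (blast dest: walk_split)
  then have "gdist E x z \<le> i" "gdist E z y \<le> gdist E x y - i"
    by (auto intro: gdist_le_walk)
  moreover have "gdist E x y \<le> gdist E x z + gdist E z y"
    using gdist_triangle[OF assms(1)] .
  ultimately have "gdist E x z = i" "gdist E z y = gdist E x y - i"
    using assms(2) by linarith+
  then show thesis by (rule that)
qed

lemma intersection_number_eq:
  assumes "distance_regular E" and "gdist E x y = h" and "gdist E x' y' = h"
  shows "card {z. gdist E x z = i \<and> gdist E y z = j} =
    card {z. gdist E x' z = i \<and> gdist E y' z = j}"
  using assms unfolding distance_regular_def by blast

lemma antipode_unique:
  assumes "antipodal_double_cover E"
    and "gdist E x y = diameter E" and "gdist E x y' = diameter E"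
  shows "y = y'"
  using assms unfolding antipodal_double_cover_def by blast

lemma antipode_gdist:
  fixes E :: "'a::finite \<Rightarrow> 'a \<Rightarrow> bool"
  assumes adc: "antipodal_double_cover E" and xh: "gdist E x xh = diameter E"
  shows "gdist E z xh = diameter E - gdist E x z"
proof -
  define D where "D = diameter E"
  define i where "i = gdist E x z"
  have dr: "distance_regular E" using adc by (simp add: antipodal_double_cover_def)
  then have con: "connected_graph E" by (simp add: distance_regular_def)
  have "i \<le> gdist E x xh" unfolding i_def xh by (rule gdist_le_diameter)
  then obtain z0 where z0: "gdist E x z0 = i" "gdist E z0 xh = gdist E x xh - i"
    by (rule geodesic_vertex[OF con])
  have "{w. gdist E x w = D \<and> gdist E z0 w = D - i} = {xh}"
    using antipode_unique[OF adc] xh z0(2) unfolding D_def by auto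
  moreover have "card {w. gdist E x w = D \<and> gdist E z0 w = D - i} =
      card {w. gdist E x w = D \<and> gdist E z w = D - i}"
    by (rule intersection_number_eq[OF dr z0(1) i_def[symmetric]])
  ultimately have "card {w. gdist E x w = D \<and> gdist E z w = D - i} = 1" by simp
  then obtain w where "{w. gdist E x w = D \<and> gdist E z w = D - i} = {w}"
    by (rule card_1_singletonE)
  then have w: "gdist E x w = D" "gdist E z w = D - i" by auto
  have "w = xh" using antipode_unique[OF adc] w(1) xh unfolding D_def by blast
  then show ?thesis using w(2) unfolding D_def i_def by simp
qed

lemma dual_idem_antipode:
  fixes E :: "'a::finite \<Rightarrow> 'a \<Rightarrow> bool"
  assumes "\<And>y. gdist E xh y = diameter E - gdist E x y" and "i \<le> diameter E"
  shows "dual_idem E x i = dual_idem E xh (diameter E - i)"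
proof -
  have "gdist E x y = i \<longleftrightarrow> gdist E xh y = diameter E - i" for y
    using assms gdist_le_diameter[of E x y] by auto
  then show ?thesis unfolding dual_idem_def by simp
qed

lemma terwilliger_alg_subset:
  assumes "\<And>i. i \<le> diameter E \<Longrightarrow> dual_idem E x i \<in> terwilliger_alg E x'"
  shows "terwilliger_alg E x \<subseteq> terwilliger_alg E x'"
proof
  show "M \<in> terwilliger_alg E x \<Longrightarrow> M \<in> terwilliger_alg E x'" for M
    by (induction rule: terwilliger_alg.induct)
       (simp_all add: assms terwilliger_alg.gen_A terwilliger_alg.gen_I terwilliger_alg.add
         terwilliger_alg.smult terwilliger_alg.mult)
qed

lemma terwilliger_alg_antipode:
  fixes E :: "'a::finite \<Rightarrow> 'a \<Rightarrow> bool"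
  assumes adc: "antipodal_double_cover E" and xh: "gdist E x xh = diameter E"
  shows "terwilliger_alg E x = terwilliger_alg E xh"
proof -
  have "simple_graph E" "connected_graph E"
    using adc by (auto simp: antipodal_double_cover_def distance_regular_def)
  note commute = gdist_commute[OF this]
  have "gdist E xh x = diameter E" using xh commute[of xh x] by simp
  have x_xh: "gdist E xh y = diameter E - gdist E x y" for y
    using antipode_gdist[OF adc xh, of y] commute[of y xh] by simp
  have xh_x: "gdist E x y = diameter E - gdist E xh y" for y
    using antipode_gdist[OF adc \<open>gdist E xh x = diameter E\<close>, of y] commute[of y x] by simp
  show ?thesis
  proof (intro equalityI terwilliger_alg_subset)
    show "dual_idem E x i \<in> terwilliger_alg E xh" if "i \<le> diameter E" for i
      using that by (simp add: dual_idem_antipode[OF x_xh] terwilliger_alg.gen_E)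
    show "dual_idem E xh i \<in> terwilliger_alg E x" if "i \<le> diameter E" for i
      using that by (simp add: dual_idem_antipode[OF xh_x] terwilliger_alg.gen_E)
  qed
qed

theorem lemma6p1:
  fixes E :: "'a::finite \<Rightarrow> 'a \<Rightarrow> bool"
    and x xh :: 'a
    and W :: "('a \<Rightarrow> complex) set"
  assumes "antipodal_double_cover E"
    and "diameter E \<ge> 3"
    and "gdist E x xh = diameter E"
  shows "irreducible_T_module E x W \<longleftrightarrow> irreducible_T_module E xh W"
  using terwilliger_alg_antipode[OF assms(1) assms(3)]
  unfolding irreducible_T_module_def T_module_def by simp

end
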